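(* Let $\mathcal{C}$ be an $[n,k]_q$ code such that for every $c\in\mathcal{C}\setminus\{0\}$ the entries of $V(c)$ are pairwise distinct. Then there exists a non-zero $r=(r_1,\dots,r_{q-1})\in\mathbb{N}^{q-1}$ such that for every $c\in\mathcal{C}\setminus\{0\}$: $$\sum_{j=1}^{q-1} r_j\left(c[\alpha^{i-j}]-c[\alpha^{\ell-j}]\right)\neq 0\ \text{ for all } 1\le i<\ell\le q-1,\quad\text{and}\quad \sum_{j=1}^{q-1} r_j\left(c[\alpha^{\ell-j}]-c[0]\right)\neq 0\ \text{ for all } 1\le \ell\le q-1.$$
   Context: $\alpha$ is a fixed primitive element of $\mathbb{F}_q$ (exponents modulo $q-1$), $\mathbb{N}=\{0,1,2,\dots\}$. An $[n,k]_q$ code is a $k$-dimensional subspace of $\mathbb{F}_q^n$. For $c\in\mathbb{F}_q^n$, $\beta\in\mathbb{F}_q$, $c[\beta]=|\{l:c_l=\beta\}|$ and $V(c)=(c[\alpha],\dots,c[\alpha^{q-1}],c[0])$. *)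

theory Defs
  imports "HOL-Analysis.Analysis"
begin

definition primitive_elem :: "'a::{field,finite} \<Rightarrow> bool" where
  "primitive_elem a \<longleftrightarrow> a \<noteq> 0 \<and> (\<forall>x. x \<noteq> 0 \<longrightarrow> (\<exists>i::nat. x = a ^ i))"

definition apow :: "'a::{field,finite} \<Rightarrow> int \<Rightarrow> 'a" where
  "apow a e = a ^ nat (e mod int (CARD('a) - 1))"

text \<open>c[beta]: number of coordinates of c equal to beta.\<close>
definition wcount :: "'a ^ 'n \<Rightarrow> 'a \<Rightarrow> nat" where
  "wcount c b = card {l. c $ l = b}"

text \<open>V(c), indexed 1..q: entry j (j \<le> q-1) is c[alpha^j], entry q is c[0].\<close>
definition Vvec :: "'a::{field,finite} \<Rightarrow> 'a ^ 'n \<Rightarrow> nat \<Rightarrow> nat" where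
  "Vvec a c j = (if j \<le> CARD('a) - 1 then wcount c (apow a (int j)) else wcount c 0)"

definition is_code :: "('a::{field,finite} ^ 'n) set \<Rightarrow> nat \<Rightarrow> bool" where
  "is_code C k \<longleftrightarrow> vec.subspace C \<and> vec.dim C = k"

end

theory Submission
  imports Defs
begin

text \<open>The weight vector r = (1,0,...,0) already works: it collapses each sum to a single
  difference c[\<alpha>^(i-1)] - c[\<alpha>^(l-1)] or c[\<alpha>^(l-1)] - c[0]. With exponents read modulo q - 1
  these are differences of two distinct entries of V(c), hence non-zero.\<close>

lemma card_field_ge_2: "CARD('a::{field,finite}) \<ge> 2"
proof -
  have "card {0::'a, 1} \<le> CARD('a)" by (intro card_mono) auto
  thus ?thesis by simp
qed

definition cyclic_pred :: "nat \<Rightarrow> nat \<Rightarrow> nat" where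
  "cyclic_pred m i = (if i = 1 then m else i - 1)"

lemma cyclic_pred_in_range: "1 \<le> i \<Longrightarrow> i \<le> m \<Longrightarrow> cyclic_pred m i \<in> {1..m}"
  by (auto simp: cyclic_pred_def)

lemma inj_on_cyclic_pred: "inj_on (cyclic_pred m) {1..m}"
  by (auto simp: inj_on_def cyclic_pred_def split: if_splits)

lemma apow_pred_eq_apow_cyclic_pred:
  fixes \<alpha> :: "'a::{field,finite}"
  assumes "1 \<le> i"
  shows "apow \<alpha> (int i - 1) = apow \<alpha> (int (cyclic_pred (CARD('a) - 1) i))"
  using assms by (auto simp: apow_def cyclic_pred_def of_nat_diff)

lemma wcount_apow_pred_eq_Vvec:
  fixes \<alpha> :: "'a::{field,finite}" and c :: "'a ^ 'n"
  assumes "1 \<le> i" "i \<le> CARD('a) - 1"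
  shows "wcount c (apow \<alpha> (int i - 1)) = Vvec \<alpha> c (cyclic_pred (CARD('a) - 1) i)"
  using assms cyclic_pred_in_range[OF assms]
  by (simp add: apow_pred_eq_apow_cyclic_pred Vvec_def)

lemma wcount_zero_eq_Vvec:
  fixes \<alpha> :: "'a::{field,finite}" and c :: "'a ^ 'n"
  shows "wcount c 0 = Vvec \<alpha> c CARD('a)"
proof -
  have "\<not> CARD('a) \<le> CARD('a) - 1" using card_field_ge_2[where 'a='a] by simp
  then show ?thesis by (simp add: Vvec_def)
qed

lemma sum_first_unit_weight:
  fixes m :: nat
  assumes "1 \<le> m"
  shows "(\<Sum>j = 1..m. int (of_bool (j = 1)) * f j) = (f 1 :: int)"
proof -
  have "(\<Sum>j = 1..m. int (of_bool (j = 1)) * f j) = (\<Sum>j \<in> {1..m}. if j = 1 then f j else 0)"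
    by (rule sum.cong) auto
  also have "\<dots> = f 1" using assms by (subst sum.delta) auto
  finally show ?thesis .
qed

theorem mainTheorem8:
  fixes \<alpha> :: "'a::{field,finite}" and C :: "('a ^ 'n) set" and k :: nat
  assumes prim: "primitive_elem \<alpha>"
    and code: "is_code C k"
    and dist: "\<forall>c \<in> C - {0}. inj_on (Vvec \<alpha> c) {1..CARD('a)}"
  shows "\<exists>r :: nat \<Rightarrow> nat. (\<exists>j \<in> {1..CARD('a) - 1}. r j \<noteq> 0) \<and>
     (\<forall>c \<in> C - {0}.
        (\<forall>i l. 1 \<le> i \<and> i < l \<and> l \<le> CARD('a) - 1 \<longrightarrow>
           (\<Sum>j = 1..CARD('a) - 1. int (r j) *
              (int (wcount c (apow \<alpha> (int i - int j))) - int (wcount c (apow \<alpha> (int l - int j))))) \<noteq> 0) \<and>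
        (\<forall>l. 1 \<le> l \<and> l \<le> CARD('a) - 1 \<longrightarrow>
           (\<Sum>j = 1..CARD('a) - 1. int (r j) *
              (int (wcount c (apow \<alpha> (int l - int j))) - int (wcount c 0))) \<noteq> 0))"
proof (intro exI[of _ "\<lambda>j. of_bool (j = 1)"] conjI ballI allI impI)
  let ?m = "CARD('a) - 1"
  have m: "1 \<le> ?m" using card_field_ge_2[where 'a='a] by simp
  then show "\<exists>j\<in>{1..?m}. of_bool (j = 1) \<noteq> (0::nat)" by auto
  fix c assume "c \<in> C - {0}"
  then have inj: "inj_on (Vvec \<alpha> c) {1..CARD('a)}" using dist by blast
  then have inj_m: "inj_on (Vvec \<alpha> c) {1..?m}" by (rule inj_on_subset) auto
  {
    fix i l assume il: "1 \<le> i \<and> i < l \<and> l \<le> ?m"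
    have "cyclic_pred ?m i \<noteq> cyclic_pred ?m l"
      using il inj_on_eq_iff[OF inj_on_cyclic_pred, of i ?m l] by auto
    with il have "Vvec \<alpha> c (cyclic_pred ?m i) \<noteq> Vvec \<alpha> c (cyclic_pred ?m l)"
      using inj_on_eq_iff[OF inj_m cyclic_pred_in_range cyclic_pred_in_range, of i l] by auto
    with il m show "(\<Sum>j = 1..?m. int (of_bool (j = 1)) *
        (int (wcount c (apow \<alpha> (int i - int j))) - int (wcount c (apow \<alpha> (int l - int j))))) \<noteq> 0"
      by (simp add: sum_first_unit_weight wcount_apow_pred_eq_Vvec)
  }
  fix l assume l: "1 \<le> l \<and> l \<le> ?m"
  then have "Vvec \<alpha> c (cyclic_pred ?m l) \<noteq> Vvec \<alpha> c CARD('a)"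
    using inj cyclic_pred_in_range[of l ?m] by (auto simp: inj_on_eq_iff)
  with l m show "(\<Sum>j = 1..?m. int (of_bool (j = 1)) *
      (int (wcount c (apow \<alpha> (int l - int j))) - int (wcount c 0))) \<noteq> 0"
    by (simp add: sum_first_unit_weight wcount_apow_pred_eq_Vvec wcount_zero_eq_Vvec[of c \<alpha>])
qed

end
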